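(* Let $r\ge0$. Then $$\int_{B(\mathcal{I},r)^c}\mathrm{d}\mu(\mathcal{U})\,\tilde{\mathcal{F}}^\sigma(\mathcal{U})\le\int_{\{U\in\mathrm{U}(d):\|U-I\|_\infty>r\}}\mathrm{d}\mu(U)\,F^\sigma(U),$$ where $B(\mathcal{I},r)^c=\{\mathcal{U}\in\mathcal{U}(d):\mathrm{D}(\mathcal{U},\mathcal{I})>r\}$.
   Context: $\mathcal{U}(d)$ is the set of unitary channels on $\mathbb{C}^d$, $\mathcal{I}$ the identity channel, $\mathrm{D}(\mathcal{U},\mathcal{V})=\min_\varphi\|U-e^{i\varphi}V\|_\infty$, $\mu$ the Haar probability measure (on $\mathrm{U}(d)$ and its pushforward on $\mathcal{U}(d)$). For $\sigma>0$, $f^\sigma_p(\boldsymbol\varphi)=\sum_{\mathbf{k}\in\mathbb{Z}^d}(\sqrt{2\pi}\sigma)^{-d}e^{-|\boldsymbol\varphi+2\pi\mathbf{k}|^2/(2\sigma^2)}$ on $[-\pi,\pi]^d$; $F^\sigma(U)=f^\sigma_p(\varphi_1,\dots,\varphi_d)$ where $e^{i\varphi_j}$ are the eigenvalues of $U$; $\tilde{\mathcal{F}}^\sigma(U)=\frac1{2\pi}\int_0^{2\pi}F^\sigma(e^{i\phi}U)\,\mathrm{d}\phi$, a phase-invariant function regarded as a function on $\mathcal{U}(d)$. *)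

theory Defs
  imports "HOL-Probability.Probability"
begin

text \<open>Matrices in U(d) are modelled as complex^'n^'n with d = CARD('n).\<close>

definition ctrans :: "complex^'n^'n \<Rightarrow> complex^'n^'n" where
  "ctrans U = (\<chi> i j. cnj (U $ j $ i))"

definition unitary_mat :: "complex^'n^'n \<Rightarrow> bool" where
  "unitary_mat U \<longleftrightarrow> ctrans U ** U = mat 1 \<and> U ** ctrans U = mat 1"

definition unitary_group :: "(complex^'n^'n) set" where
  "unitary_group = {U. unitary_mat U}"

definition opnorm :: "complex^'n^'n \<Rightarrow> real" where
  "opnorm A = onorm (\<lambda>x. A *v x)"

definition chan_dist :: "complex^'n^'n \<Rightarrow> complex^'n^'n \<Rightarrow> real" where
  "chan_dist U V = (INF \<phi>::real. opnorm (U - mat (exp (\<i> * of_real \<phi>)) ** V))"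

definition fp :: "real \<Rightarrow> ('n::finite \<Rightarrow> real) \<Rightarrow> real" where
  "fp \<sigma> \<phi> = (\<Sum>\<^sub>\<infinity> k \<in> (UNIV :: ('n \<Rightarrow> int) set).
      (sqrt (2*pi) * \<sigma>) powi (- int CARD('n)) *
      exp (- (\<Sum>i\<in>UNIV. (\<phi> i + 2 * pi * real_of_int (k i))^2) / (2 * \<sigma>^2)))"

text \<open>\<open>\<phi>\<close> lists eigenphases of U (with multiplicity): the characteristic polynomial of U
  is \<open>\<Prod>_j (z - e^{i\<phi>_j})\<close>.\<close>
definition eigenphases :: "complex^'n^'n \<Rightarrow> ('n \<Rightarrow> real) \<Rightarrow> bool" where
  "eigenphases U \<phi> \<longleftrightarrow> (\<forall>z::complex. det (mat z - U) = (\<Prod>j\<in>UNIV. z - exp (\<i> * of_real (\<phi> j))))"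

definition Fsig :: "real \<Rightarrow> complex^'n^'n \<Rightarrow> real" where
  "Fsig \<sigma> U = fp \<sigma> (SOME \<phi>. eigenphases U \<phi>)"

definition Ftilde :: "real \<Rightarrow> complex^'n^'n \<Rightarrow> real" where
  "Ftilde \<sigma> U = (1 / (2*pi)) * (LINT \<phi>:{0..2*pi}|lborel. Fsig \<sigma> (mat (exp (\<i> * of_real \<phi>)) ** U))"

text \<open>Haar probability measure on U(d): Borel probability measure on the unitary group,
  invariant under left multiplication (this characterizes it uniquely).\<close>
definition haar_measure :: "(complex^'n^'n) measure \<Rightarrow> bool" where
  "haar_measure M \<longleftrightarrow> prob_space M \<and>
     sets M = sets (restrict_space borel unitary_group) \<and>
     space M = unitary_group \<and>
     (\<forall>V\<in>unitary_group. distr M M (\<lambda>U. V ** U) = M)"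

end

(* Ftilde is the mean of F = Fsig over the orbit {e^(i phi) U} of global phases. The Haar measure is
   invariant under the scalar unitaries e^(i phi) I, and {U. D(U, I) > r} is a union of such orbits,
   so Fubini turns the integral of Ftilde over this set into the integral of F over it. Since
   D(U, I) <= ||U - I||, the set lies inside {U. ||U - I|| > r}, and F >= 0 gives the inequality.

   The real work is to make F tractable: the eigenphases of U are determined only up to order and
   multiples of 2 pi, but the periodised Gaussian is a product of 2 pi-periodic one-dimensional
   wrapped Gaussians, and the multiset of eigenvalues is fixed by the characteristic polynomial.
   F is bounded, and it is Borel because its superlevel sets are projections of closed sets along
   a compact box of phases. *)

theory Submission
  imports Defs "HOL-Computational_Algebra.Fundamental_Theorem_Algebra"
begin

section \<open>Wrapped Gaussians\<close>

definition wrapped_gauss_term :: "real \<Rightarrow> real \<Rightarrow> int \<Rightarrow> real" where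
  "wrapped_gauss_term \<sigma> x k = exp (- ((x + 2 * pi * of_int k)^2) / (2 * \<sigma>^2))"

definition wrapped_gauss :: "real \<Rightarrow> real \<Rightarrow> real" where
  "wrapped_gauss \<sigma> x = infsum (wrapped_gauss_term \<sigma> x) UNIV"

definition wrapped_gauss_majorant :: "real \<Rightarrow> int \<Rightarrow> real" where
  "wrapped_gauss_majorant \<sigma> k = exp (2 * pi^2 / \<sigma>^2) * exp (- 2 * pi^2 / \<sigma>^2) ^ nat \<bar>k\<bar>"

lemma summable_on_power_nat_abs:
  fixes q :: real
  assumes "0 \<le> q" "q < 1"
  shows "(\<lambda>k::int. q ^ nat \<bar>k\<bar>) summable_on UNIV"
proof -
  have geometric: "(\<lambda>n::nat. q ^ n) summable_on UNIV"
    using assms by (subst summable_on_UNIV_nonneg_real_iff) (auto intro: summable_geometric)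
  have "(\<lambda>k::int. q ^ nat \<bar>k\<bar>) summable_on range int"
    by (subst summable_on_reindex) (use geometric in \<open>auto simp: o_def\<close>)
  moreover have "(\<lambda>k::int. q ^ nat \<bar>k\<bar>) summable_on range (\<lambda>n. - int n)"
    by (subst summable_on_reindex) (use geometric in \<open>auto simp: o_def inj_on_def\<close>)
  ultimately have "(\<lambda>k::int. q ^ nat \<bar>k\<bar>) summable_on (range int \<union> range (\<lambda>n. - int n))"
    by (rule summable_on_union)
  moreover have "k \<in> range int \<union> range (\<lambda>n. - int n)" for k :: int
    by (cases k rule: int_cases2) auto
  ultimately show ?thesis
    by (metis UNIV_eq_I)
qed

lemma summable_wrapped_gauss_majorant:
  assumes "\<sigma> \<noteq> 0"
  shows "wrapped_gauss_majorant \<sigma> summable_on UNIV"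
proof -
  have "exp (- 2 * pi^2 / \<sigma>^2) < 1"
    using assms by (simp add: divide_neg_pos)
  then show ?thesis
    unfolding wrapped_gauss_majorant_def
    by (intro summable_on_cmult_right summable_on_power_nat_abs) auto
qed

lemma wrapped_gauss_term_nonneg: "0 \<le> wrapped_gauss_term \<sigma> x k"
  by (simp add: wrapped_gauss_term_def)

lemma wrapped_gauss_term_le_majorant:
  assumes "\<bar>x\<bar> \<le> 2 * pi"
  shows "wrapped_gauss_term \<sigma> x k \<le> wrapped_gauss_majorant \<sigma> k"
proof -
  have far: "2 * pi * (\<bar>k\<bar> - 1) \<le> \<bar>x + 2 * pi * of_int k\<bar>"
    using assms abs_triangle_ineq2[of "2 * pi * of_int k" "- x"] by (simp add: abs_mult algebra_simps)
  have square: "4 * pi^2 * (\<bar>k\<bar> - 1) \<le> (x + 2 * pi * of_int k)^2"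
  proof (cases "k = 0")
    case False
    define m where "m = \<bar>k\<bar> - 1"
    have "0 \<le> m"
      using False by (simp add: m_def)
    moreover have "m \<le> m^2"
      using \<open>0 \<le> m\<close> by (cases "m = 0") (auto intro: self_le_power)
    ultimately
    have "4 * pi^2 * m \<le> (2 * pi * m)^2"
      by (simp add: power_mult_distrib)
    also have "\<dots> \<le> \<bar>x + 2 * pi * of_int k\<bar>^2"
      using far \<open>0 \<le> m\<close> by (intro power_mono) (auto simp: m_def)
    finally show ?thesis
      by (simp add: m_def)
  qed (simp, use zero_le_power2[of x] zero_le_power2[of pi] in linarith)
  have "- ((x + 2 * pi * of_int k)^2) / (2 * \<sigma>^2) \<le> - (4 * pi^2 * (\<bar>k\<bar> - 1)) / (2 * \<sigma>^2)"
    using square by (intro divide_right_mono) auto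
  also have "\<dots> = 2 * pi^2 / \<sigma>^2 + nat \<bar>k\<bar> * (- 2 * pi^2 / \<sigma>^2)"
    by (cases "\<sigma> = 0") (simp_all add: field_simps)
  finally have "wrapped_gauss_term \<sigma> x k \<le> exp (2 * pi^2 / \<sigma>^2 + nat \<bar>k\<bar> * (- 2 * pi^2 / \<sigma>^2))"
    unfolding wrapped_gauss_term_def by simp
  also have "\<dots> = wrapped_gauss_majorant \<sigma> k"
    by (simp only: wrapped_gauss_majorant_def exp_add exp_of_nat_mult)
  finally show ?thesis .
qed

lemma wrapped_gauss_term_shift:
  "wrapped_gauss_term \<sigma> (x + 2 * pi * of_int m) k = wrapped_gauss_term \<sigma> x (k + m)"
  by (simp add: wrapped_gauss_term_def algebra_simps)

lemma exists_int_shift_abs_le_pi: "\<exists>m::int. \<bar>x + 2 * pi * of_int m\<bar> \<le> pi"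
proof
  have "\<bar>of_int (round (x / (2 * pi))) - x / (2 * pi)\<bar> \<le> 1 / 2"
    by (rule of_int_round_abs_le)
  then have "\<bar>2 * pi * (of_int (round (x / (2 * pi))) - x / (2 * pi))\<bar> \<le> pi"
    by (simp add: abs_mult)
  then show "\<bar>x + 2 * pi * of_int (- round (x / (2 * pi)))\<bar> \<le> pi"
    by (simp add: algebra_simps abs_minus_commute)
qed

lemma summable_wrapped_gauss_term:
  assumes "\<sigma> \<noteq> 0"
  shows "wrapped_gauss_term \<sigma> x summable_on UNIV"
proof -
  obtain m where m: "\<bar>x + 2 * pi * of_int m\<bar> \<le> pi"
    using exists_int_shift_abs_le_pi by blast
  have "wrapped_gauss_term \<sigma> (x + 2 * pi * of_int m) summable_on UNIV"
    using m by (intro summable_on_comparison_test[OF summable_wrapped_gauss_majorant[OF assms]])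
      (auto intro: wrapped_gauss_term_le_majorant wrapped_gauss_term_nonneg)
  then show ?thesis
    unfolding wrapped_gauss_term_shift
    using summable_on_reindex_bij_betw[OF bij_plus_right, of "wrapped_gauss_term \<sigma> x" m] by simp
qed

lemma wrapped_gauss_periodic: "wrapped_gauss \<sigma> (x + 2 * pi * of_int m) = wrapped_gauss \<sigma> x"
  unfolding wrapped_gauss_def wrapped_gauss_term_shift
  using infsum_reindex_bij_betw[OF bij_plus_right, of "wrapped_gauss_term \<sigma> x" m] by simp

lemma wrapped_gauss_nonneg: "0 \<le> wrapped_gauss \<sigma> x"
  unfolding wrapped_gauss_def by (intro infsum_nonneg wrapped_gauss_term_nonneg)

lemma wrapped_gauss_le_majorant_sum:
  assumes "\<sigma> \<noteq> 0"
  shows "wrapped_gauss \<sigma> x \<le> infsum (wrapped_gauss_majorant \<sigma>) UNIV"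
proof -
  obtain m where m: "\<bar>x + 2 * pi * of_int m\<bar> \<le> pi"
    using exists_int_shift_abs_le_pi by blast
  have "wrapped_gauss \<sigma> (x + 2 * pi * of_int m) \<le> infsum (wrapped_gauss_majorant \<sigma>) UNIV"
    unfolding wrapped_gauss_def using m
    by (intro infsum_mono summable_wrapped_gauss_term summable_wrapped_gauss_majorant assms
        wrapped_gauss_term_le_majorant) auto
  then show ?thesis
    by (simp add: wrapped_gauss_periodic)
qed

lemma continuous_on_wrapped_gauss:
  assumes "\<sigma> \<noteq> 0"
  shows "continuous_on UNIV (wrapped_gauss \<sigma>)"
proof -
  have "continuous_on {-2*pi..2*pi} (wrapped_gauss \<sigma>)"
  proof (rule uniform_limit_theorem)
    show "uniform_limit {-2*pi..2*pi} (\<lambda>K x. \<Sum>k\<in>K. wrapped_gauss_term \<sigma> x k) (wrapped_gauss \<sigma>)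
        (finite_subsets_at_top UNIV)"
      unfolding wrapped_gauss_def
      by (rule Weierstrass_m_test_general[OF _ summable_wrapped_gauss_majorant[OF assms]])
        (auto simp: wrapped_gauss_term_nonneg intro!: wrapped_gauss_term_le_majorant)
    show "\<forall>\<^sub>F K in finite_subsets_at_top UNIV.
        continuous_on {-2*pi..2*pi} (\<lambda>x. \<Sum>k\<in>K. wrapped_gauss_term \<sigma> x k)"
      unfolding wrapped_gauss_term_def using assms by (intro always_eventually allI continuous_intros) auto
  qed (rule finite_subsets_at_top_neq_bot)
  then have interior: "isCont (wrapped_gauss \<sigma>) x" if "\<bar>x\<bar> \<le> pi" for x
  proof (rule continuous_on_interior)
    have "- (2 * pi) < x" "x < 2 * pi"
      using abs_le_D1[OF that] abs_le_D2[OF that] pi_gt_zero by linarith+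
    then show "x \<in> interior {-2*pi..2*pi}"
      by simp
  qed
  have "isCont (wrapped_gauss \<sigma>) x" for x
  proof -
    obtain m where m: "\<bar>x + 2 * pi * of_int m\<bar> \<le> pi"
      using exists_int_shift_abs_le_pi by blast
    have "isCont (\<lambda>y. wrapped_gauss \<sigma> (y + 2 * pi * of_int m)) x"
      by (rule isCont_o2[where f = "\<lambda>y. y + 2 * pi * of_int m", OF _ interior[OF m]]) simp
    then show ?thesis
      by (simp add: wrapped_gauss_periodic)
  qed
  then show ?thesis
    by (simp add: continuous_at_imp_continuous_on)
qed

section \<open>The periodised Gaussian as a function of the eigenvalues\<close>

lemma fp_eq_prod_wrapped_gauss:
  fixes \<phi> :: "'n::finite \<Rightarrow> real"
  assumes "\<sigma> \<noteq> 0"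
  shows "fp \<sigma> \<phi> = (sqrt (2 * pi) * \<sigma>) powi (- int CARD('n)) * (\<Prod>i\<in>UNIV. wrapped_gauss \<sigma> (\<phi> i))"
proof -
  have exp_sum: "exp (- (\<Sum>i\<in>UNIV. (\<phi> i + 2 * pi * of_int (k i))^2) / (2 * \<sigma>^2))
      = (\<Prod>i\<in>UNIV. wrapped_gauss_term \<sigma> (\<phi> i) (k i))" for k :: "'n \<Rightarrow> int"
    by (simp add: wrapped_gauss_term_def exp_sum sum_divide_distrib sum_negf[symmetric])
  have "(\<Sum>\<^sub>\<infinity>k\<in>PiE UNIV (\<lambda>_. UNIV). \<Prod>i\<in>UNIV. wrapped_gauss_term \<sigma> (\<phi> i) (k i))
      = (\<Prod>i\<in>UNIV. wrapped_gauss \<sigma> (\<phi> i))"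
    unfolding wrapped_gauss_def
    by (rule infsum_prod_PiE_abs)
      (simp_all add: wrapped_gauss_term_nonneg summable_wrapped_gauss_term assms)
  then show ?thesis
    unfolding fp_def exp_sum infsum_cmult_right' by simp
qed

lemma wrapped_gauss_Arg_exp:
  "wrapped_gauss \<sigma> (Arg (exp (\<i> * of_real x))) = wrapped_gauss \<sigma> x"
proof -
  have "exp (\<i> * of_real (Arg (exp (\<i> * of_real x)))) = exp (\<i> * of_real x)"
    using complex_norm_eq_1_exp_eq norm_exp_i_times by blast
  then obtain n :: int where
    "\<i> * of_real (Arg (exp (\<i> * of_real x))) = \<i> * of_real x + of_real (of_int (2 * n) * pi) * \<i>"
    unfolding exp_eq by blast
  then have "Im (\<i> * of_real (Arg (exp (\<i> * of_real x))))
      = Im (\<i> * of_real x + of_real (of_int (2 * n) * pi) * \<i>)"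
    by (rule arg_cong)
  then have "Arg (exp (\<i> * of_real x)) = x + 2 * pi * of_int n"
    by simp
  then show ?thesis
    by (simp add: wrapped_gauss_periodic)
qed

lemma order_prod_linear_factors:
  fixes c :: "'a \<Rightarrow> 'b::idom"
  assumes "finite A"
  shows "order a (\<Prod>j\<in>A. [:- c j, 1:]) = card {j\<in>A. c j = a}"
  using assms
proof (induction A rule: finite_induct)
  case (insert x A)
  have "(\<Prod>j\<in>insert x A. [:- c j, 1:]) \<noteq> 0"
    using insert.hyps(1) by simp
  then have "order a (\<Prod>j\<in>insert x A. [:- c j, 1:])
      = order a [:- c x, 1:] + order a (\<Prod>j\<in>A. [:- c j, 1:])"
    unfolding prod.insert[OF insert.hyps] by (rule order_mult)
  also have "order a (\<Prod>j\<in>A. [:- c j, 1:]) = card {j\<in>A. c j = a}"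
    by (rule insert.IH)
  also have "order a [:- c x, 1:] = (if c x = a then 1 else 0)"
    using order_power_n_n[of a 1] by (auto intro: order_0I)
  also have "(if c x = a then 1 else 0) + card {j\<in>A. c j = a} = card {j\<in>insert x A. c j = a}"
  proof -
    have "{j\<in>insert x A. c j = a} = (if c x = a then insert x {j\<in>A. c j = a} else {j\<in>A. c j = a})"
      by auto
    then show ?thesis
      using insert.hyps by simp
  qed
  finally show ?case .
qed simp

lemma eigenphases_card_eq:
  fixes U :: "complex^'n^'n"
  assumes "eigenphases U \<phi>" "eigenphases U \<psi>"
  shows "card {j. exp (\<i> * of_real (\<phi> j)) = a} = card {j. exp (\<i> * of_real (\<psi> j)) = a}"
proof -
  define P where "P \<theta> = (\<Prod>j\<in>UNIV. [:- exp (\<i> * of_real (\<theta> j)), 1:])" for \<theta> :: "'n \<Rightarrow> real"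
  have "poly (P \<theta>) z = (\<Prod>j\<in>UNIV. z - exp (\<i> * of_real (\<theta> j)))" for \<theta> z
    unfolding P_def by (simp add: poly_prod)
  then have "poly (P \<phi>) = poly (P \<psi>)"
    using assms unfolding eigenphases_def by auto
  then have "order a (P \<phi>) = order a (P \<psi>)"
    by (simp add: poly_eq_poly_eq_iff)
  then show ?thesis
    unfolding P_def by (simp add: order_prod_linear_factors)
qed

lemma prod_comp_eq_if_card_fibres_eq:
  fixes l k :: "'n::finite \<Rightarrow> 'a" and h :: "'a \<Rightarrow> 'b::comm_monoid_mult"
  assumes "\<And>a. card {j. l j = a} = card {j. k j = a}"
  shows "(\<Prod>j\<in>UNIV. h (l j)) = (\<Prod>j\<in>UNIV. h (k j))"
proof -
  have fibres: "(\<Prod>j\<in>UNIV. h (m j)) = (\<Prod>y\<in>{y. card {j. m j = y} \<noteq> 0}. h y ^ card {j. m j = y})"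
    for m :: "'n \<Rightarrow> 'a"
  proof -
    have "(\<Prod>j\<in>UNIV. h (m j)) = (\<Prod>y\<in>range m. \<Prod>j\<in>{j\<in>UNIV. m j = y}. h (m j))"
      by (rule prod.image_gen) simp
    also have "range m = {y. card {j. m j = y} \<noteq> 0}"
      by auto
    finally show ?thesis
      by simp
  qed
  show ?thesis
    using fibres[of l] fibres[of k] assms by simp
qed

lemma fp_eigenphases_eq:
  assumes "\<sigma> \<noteq> 0" "eigenphases U \<phi>" "eigenphases U \<psi>"
  shows "fp \<sigma> \<phi> = fp \<sigma> \<psi>"
proof -
  define h where "h w = wrapped_gauss \<sigma> (Arg w)" for w
  have "(\<Prod>j\<in>UNIV. wrapped_gauss \<sigma> (\<phi> j)) = (\<Prod>j\<in>UNIV. h (exp (\<i> * of_real (\<phi> j))))"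
    by (simp add: h_def wrapped_gauss_Arg_exp)
  also have "\<dots> = (\<Prod>j\<in>UNIV. h (exp (\<i> * of_real (\<psi> j))))"
    by (rule prod_comp_eq_if_card_fibres_eq) (rule eigenphases_card_eq[OF assms(2,3)])
  also have "\<dots> = (\<Prod>j\<in>UNIV. wrapped_gauss \<sigma> (\<psi> j))"
    by (simp add: h_def wrapped_gauss_Arg_exp)
  finally show ?thesis
    by (simp add: fp_eq_prod_wrapped_gauss[OF assms(1)])
qed

lemma fp_nonneg:
  assumes "\<sigma> > 0"
  shows "0 \<le> fp \<sigma> \<phi>"
  using assms by (simp add: fp_eq_prod_wrapped_gauss wrapped_gauss_nonneg prod_nonneg)

lemma fp_bounded:
  assumes "\<sigma> > 0"
  shows "\<exists>K. \<forall>\<phi> :: 'n::finite \<Rightarrow> real. fp \<sigma> \<phi> \<le> K"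
proof -
  define B where "B = infsum (wrapped_gauss_majorant \<sigma>) UNIV"
  have "fp \<sigma> \<phi> \<le> (sqrt (2 * pi) * \<sigma>) powi (- int CARD('n)) * B ^ CARD('n)" for \<phi> :: "'n \<Rightarrow> real"
  proof -
    have "(\<Prod>i\<in>UNIV. wrapped_gauss \<sigma> (\<phi> i)) \<le> (\<Prod>i\<in>(UNIV::'n set). B)"
      using assms unfolding B_def
      by (intro prod_mono conjI wrapped_gauss_nonneg wrapped_gauss_le_majorant_sum) auto
    then show ?thesis
      using assms by (simp add: fp_eq_prod_wrapped_gauss mult_left_mono)
  qed
  then show ?thesis
    by blast
qed

lemma continuous_on_fp:
  assumes "\<sigma> \<noteq> 0"
  shows "continuous_on UNIV (\<lambda>v::real^'n. fp \<sigma> (($) v))"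
  unfolding fp_eq_prod_wrapped_gauss[OF assms]
  by (intro continuous_intros continuous_on_compose2[OF continuous_on_wrapped_gauss[OF assms]]
      continuous_on_component) auto

section \<open>Unitary matrices and their eigenphases\<close>

definition phase_shift :: "real \<Rightarrow> complex^'n^'n \<Rightarrow> complex^'n^'n" where
  "phase_shift \<phi> U = mat (exp (\<i> * of_real \<phi>)) ** U"

lemma mat_component: "(mat c :: 'a::zero^'n^'n) $ i $ j = (if i = j then c else 0)"
  by (simp add: mat_def)

lemma mat_matrix_mul_component: "(mat c ** A) $ i $ j = c * (A $ i $ j :: 'a::semiring_1)"
  by (simp add: matrix_matrix_mult_def mat_def if_distrib[of "\<lambda>x. x * y" for y] cong: if_cong)

lemma ctrans_matrix_mul: "ctrans (A ** B) = ctrans B ** ctrans (A :: complex^'n^'n)"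
  by (simp add: vec_eq_iff ctrans_def matrix_matrix_mult_def mult.commute)

lemma ctrans_mat: "ctrans (mat c :: complex^'n^'n) = mat (cnj c)"
  by (simp add: vec_eq_iff ctrans_def mat_def)

lemma unitary_mat_mult:
  assumes "unitary_mat A" "unitary_mat B"
  shows "unitary_mat (A ** B :: complex^'n^'n)"
proof -
  have "ctrans (A ** B) ** (A ** B) = ctrans B ** (ctrans A ** A) ** B"
    "(A ** B) ** ctrans (A ** B) = A ** (B ** ctrans B) ** ctrans A"
    by (simp_all add: ctrans_matrix_mul matrix_mul_assoc)
  then show ?thesis
    using assms by (simp add: unitary_mat_def)
qed

lemma unitary_mat_mat:
  assumes "cmod c = 1"
  shows "unitary_mat (mat c :: complex^'n^'n)"
proof -
  have "cnj c * c = 1"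
    using assms complex_norm_square[of c] by (simp add: mult.commute)
  then show ?thesis
    by (simp add: unitary_mat_def ctrans_mat vec_eq_iff mat_matrix_mul_component mat_component mult.commute)
qed

lemma phase_shift_in_unitary_group:
  "U \<in> unitary_group \<Longrightarrow> phase_shift \<phi> U \<in> unitary_group"
  unfolding unitary_group_def phase_shift_def
  by (simp add: unitary_mat_mult unitary_mat_mat)

lemma sum_cnj_matrix_vector_mult:
  "(\<Sum>i\<in>UNIV. cnj ((A *v x) $ i) * y $ i) = (\<Sum>j\<in>UNIV. cnj (x $ j) * (ctrans A *v y) $ j)"
  by (simp add: matrix_vector_mult_def ctrans_def sum_distrib_left sum_distrib_right mult_ac)
    (rule sum.swap)

lemma unitary_eigenvalue_norm:
  fixes U :: "complex^'n^'n"
  assumes U: "unitary_mat U" and z: "det (mat z - U) = 0"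
  shows "cmod z = 1"
proof -
  obtain x where x: "(mat z - U) *v x = 0" "x \<noteq> 0"
    using z invertible_det_nz invertible_left_inverse matrix_left_invertible_ker by metis
  have eigen: "(U *v x) $ i = z * x $ i" for i
    using arg_cong[OF x(1), of "\<lambda>v. v $ i"]
    by (simp add: matrix_vector_mult_def mat_def sum_subtractf algebra_simps
        if_distrib[of "\<lambda>a. a * y" for y] if_distrib[of "\<lambda>a. y * a" for y] cong: if_cong)
  define s where "s = (\<Sum>i\<in>UNIV. cnj (x $ i) * x $ i)"
  have "s = (\<Sum>i\<in>UNIV. cnj (x $ i) * (ctrans U *v (U *v x)) $ i)"
    using U by (simp add: s_def unitary_mat_def matrix_vector_mul_assoc)
  also have "\<dots> = cnj z * z * s"
    unfolding sum_cnj_matrix_vector_mult[symmetric] eigen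
    by (simp add: s_def sum_distrib_left mult_ac)
  finally have "(1 - cnj z * z) * s = 0"
    by (simp add: algebra_simps)
  moreover have "s \<noteq> 0"
  proof -
    obtain i where "x $ i \<noteq> 0"
      using x(2) by (auto simp: vec_eq_iff)
    then have "0 < (\<Sum>i\<in>UNIV. (cmod (x $ i))^2)"
      by (intro sum_pos2[where i = i]) auto
    moreover have "s = of_real (\<Sum>i\<in>UNIV. (cmod (x $ i))^2)"
      unfolding s_def of_real_sum complex_norm_square by (simp add: mult.commute)
    ultimately show ?thesis
      by (metis of_real_eq_0_iff order_less_irrefl)
  qed
  ultimately have "of_real ((cmod z)^2) = (1 :: complex)"
    unfolding complex_norm_square by (simp add: mult.commute)
  then have "(cmod z)^2 = 1"
    by (simp only: of_real_eq_1_iff)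
  then show ?thesis
    using norm_ge_zero[of z] by (auto simp: power2_eq_1_iff)
qed

definition charpoly :: "complex^'n^'n \<Rightarrow> complex poly" where
  "charpoly U = det (mat [:0, 1:] - (\<chi> i j. [:U $ i $ j:]))"

lemma poly_charpoly: "poly (charpoly U) z = det (mat z - U)"
proof -
  have entry: "poly ((mat [:0, 1:] - (\<chi> i j. [:U $ i $ j:])) $ i $ j) z = (mat z - U) $ i $ j" for i j
    by (simp add: mat_def)
  show ?thesis
    unfolding charpoly_def det_def poly_sum poly_mult poly_prod entry by simp
qed

lemma
  fixes U :: "complex^'n^'n"
  shows degree_charpoly: "degree (charpoly U) = CARD('n)"
    and lead_coeff_charpoly: "lead_coeff (charpoly U) = 1"
proof -
  define M where "M = mat [:0, 1:] - (\<chi> i j. [:U $ i $ j:])"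
  define f where "f p = of_int (sign p) * (\<Prod>i\<in>UNIV. M $ i $ p i)" for p :: "'n \<Rightarrow> 'n"
  define S where "S = {p. p permutes (UNIV :: 'n set)}"
  have "finite S" "id \<in> S"
    by (simp_all add: S_def finite_permutations)
  then have split: "charpoly U = f id + sum f (S - {id})"
    unfolding charpoly_def det_def M_def[symmetric] f_def[symmetric] S_def[symmetric]
    by (rule sum.remove)
  have diagonal: "f id = (\<Prod>i\<in>UNIV. [:- U $ i $ i, 1:])"
    by (simp add: f_def M_def mat_component)
  have degree_id: "degree (f id) = CARD('n)"
    unfolding diagonal by (simp add: degree_prod_eq_sum_degree)
  have lead_coeff_id: "lead_coeff (f id) = 1"
    unfolding diagonal lead_coeff_prod by simp
  \<comment> \<open>Only the identity permutation contributes a term of full degree.\<close>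
  have "degree (f p) < CARD('n)" if "p \<in> S - {id}" for p
  proof -
    have "degree (f p) \<le> degree (\<Prod>i\<in>UNIV. M $ i $ p i)"
      unfolding f_def using degree_mult_le[of "of_int (sign p)" "\<Prod>i\<in>UNIV. M $ i $ p i"] by simp
    also have "\<dots> \<le> (\<Sum>i\<in>UNIV. degree (M $ i $ p i))"
      using degree_prod_sum_le[of UNIV "\<lambda>i. M $ i $ p i"] by (simp add: o_def)
    also have "\<dots> \<le> (\<Sum>i\<in>UNIV. if p i = i then 1 else 0)"
      by (intro sum_mono) (auto simp: M_def mat_component)
    also have "\<dots> = card {i. p i = i}"
      by (simp add: sum.If_cases)
    also have "\<dots> < CARD('n)"
      using that by (intro psubset_card_mono) (auto simp: fun_eq_iff)
    finally show ?thesis .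
  qed
  then have "degree (sum f (S - {id})) < degree (f id)"
    using degree_id by (intro degree_sum_less) auto
  then show "degree (charpoly U) = CARD('n)" "lead_coeff (charpoly U) = 1"
    unfolding split using degree_id lead_coeff_id by (simp_all add: degree_add_eq_left coeff_eq_0)
qed

lemma charpoly_splits:
  fixes U :: "complex^'n^'n"
  shows "\<exists>c :: 'n \<Rightarrow> complex. \<forall>z. det (mat z - U) = (\<Prod>j\<in>UNIV. z - c j)"
proof -
  obtain root where "smult (lead_coeff (charpoly U)) (\<Prod>i<degree (charpoly U). [:- root i, 1:]) = charpoly U"
    using complex_poly_decompose' by blast
  then have "charpoly U = (\<Prod>i<CARD('n). [:- root i, 1:])"
    by (metis degree_charpoly lead_coeff_charpoly smult_1_left)
  then have roots: "det (mat z - U) = (\<Prod>i<CARD('n). z - root i)" for z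
    using poly_charpoly[of U z] by (simp add: poly_prod)
  obtain h where h: "bij_betw h (UNIV :: 'n set) {..<CARD('n)}"
    using ex_bij_betw_finite_nat[of "UNIV :: 'n set"] by (auto simp: atLeast0LessThan)
  have "det (mat z - U) = (\<Prod>j\<in>UNIV. z - root (h j))" for z
    unfolding roots by (rule prod.reindex_bij_betw[OF h, symmetric])
  then show ?thesis
    by (intro exI[of _ "\<lambda>j. root (h j)"] allI)
qed

lemma eigenphases_exist:
  fixes U :: "complex^'n^'n"
  assumes "unitary_mat U"
  shows "\<exists>\<phi>. eigenphases U \<phi> \<and> (\<forall>j. - pi < \<phi> j \<and> \<phi> j \<le> pi)"
proof -
  obtain c :: "'n \<Rightarrow> complex" where c: "\<And>z. det (mat z - U) = (\<Prod>j\<in>UNIV. z - c j)"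
    using charpoly_splits[of U] by blast
  have "det (mat (c j) - U) = 0" for j
    unfolding c by (rule prod_zero) auto
  then have "cmod (c j) = 1" for j
    by (rule unitary_eigenvalue_norm[OF assms])
  then have "exp (\<i> * of_real (Arg (c j))) = c j" for j
    using complex_norm_eq_1_exp_eq by blast
  then have "eigenphases U (\<lambda>j. Arg (c j))"
    by (simp add: eigenphases_def c)
  then show ?thesis
    using Arg_bounded by metis
qed

lemma Fsig_eq_fp:
  assumes "\<sigma> \<noteq> 0" "unitary_mat U" "eigenphases U \<phi>"
  shows "Fsig \<sigma> U = fp \<sigma> \<phi>"
proof -
  have "\<exists>\<psi>. eigenphases U \<psi>"
    using eigenphases_exist[OF assms(2)] by blast
  then have "eigenphases U (SOME \<psi>. eigenphases U \<psi>)"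
    by (rule someI_ex)
  then show ?thesis
    unfolding Fsig_def using fp_eigenphases_eq[OF assms(1) _ assms(3)] by blast
qed

lemma Fsig_nonneg: "\<sigma> > 0 \<Longrightarrow> 0 \<le> Fsig \<sigma> U"
  unfolding Fsig_def by (rule fp_nonneg)

lemma Fsig_bounded:
  assumes "\<sigma> > 0"
  shows "\<exists>K. \<forall>U :: complex^'n^'n. \<bar>Fsig \<sigma> U\<bar> \<le> K"
proof -
  obtain K where "\<forall>\<phi> :: 'n \<Rightarrow> real. fp \<sigma> \<phi> \<le> K"
    using fp_bounded[OF assms] by blast
  then have "\<bar>Fsig \<sigma> U\<bar> \<le> K" for U :: "complex^'n^'n"
    using Fsig_nonneg[OF assms, of U] by (simp add: Fsig_def)
  then show ?thesis
    by blast
qed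

section \<open>Operator norm and channel distance\<close>

(* norm on complex^'n^'m is the Frobenius norm, so this is Cauchy-Schwarz row by row. *)
lemma norm_matrix_vector_mult_le: "norm (A *v x) \<le> norm (A :: complex^'n^'m) * norm x"
proof -
  have row: "norm ((A *v x) $ i) \<le> norm (A $ i) * norm x" for i
  proof -
    have "norm ((A *v x) $ i) \<le> (\<Sum>j\<in>UNIV. \<bar>norm (A $ i $ j)\<bar> * \<bar>norm (x $ j)\<bar>)"
      unfolding matrix_vector_mult_def by (simp add: norm_sum[THEN order_trans] norm_mult)
    also have "\<dots> \<le> norm (A $ i) * norm x"
      unfolding norm_vec_def by (rule L2_set_mult_ineq)
    finally show ?thesis .
  qed
  have "norm (A *v x) \<le> L2_set (\<lambda>i. norm x * norm (A $ i)) UNIV"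
    unfolding norm_vec_def[of "A *v x"] using row by (intro L2_set_mono) (auto simp: mult.commute)
  also have "\<dots> = norm A * norm x"
    by (simp add: L2_set_right_distrib[symmetric] norm_vec_def mult.commute)
  finally show ?thesis .
qed

lemma opnorm_nonneg: "0 \<le> opnorm A"
  unfolding opnorm_def by (rule onorm_pos_le) simp

lemma opnorm_le_norm: "opnorm A \<le> norm A"
  unfolding opnorm_def by (rule onorm_le) (rule norm_matrix_vector_mult_le)

lemma opnorm_triangle: "opnorm (A + B) \<le> opnorm A + opnorm B"
  unfolding opnorm_def matrix_vector_mult_add_rdistrib by (rule onorm_triangle) simp_all

lemma opnorm_le_opnorm_add_norm_diff: "opnorm A \<le> opnorm B + norm (A - B)"
  using opnorm_triangle[of B "A - B"] opnorm_le_norm[of "A - B"] by simp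

lemma continuous_on_opnorm: "continuous_on UNIV opnorm"
proof (rule lipschitz_on_continuous_on[where L = 1], rule lipschitz_onI)
  show "dist (opnorm A) (opnorm B) \<le> 1 * dist A B" for A B :: "complex^'n^'n"
    using opnorm_le_opnorm_add_norm_diff[of A B] opnorm_le_opnorm_add_norm_diff[of B A]
    by (simp add: dist_real_def dist_norm norm_minus_commute abs_le_iff)
qed simp

lemma opnorm_mat_matrix_mul:
  assumes "cmod c = 1"
  shows "opnorm (mat c ** M) = opnorm M"
proof -
  have "norm ((mat c ** M) *v x) = norm (M *v x)" for x
  proof -
    have "((mat c ** M) *v x) $ i = c * (M *v x) $ i" for i
      by (simp add: matrix_vector_mult_def mat_matrix_mul_component sum_distrib_left mult_ac)
    then show ?thesis
      using assms by (simp add: norm_vec_def norm_mult)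
  qed
  then show ?thesis
    unfolding opnorm_def onorm_def by simp
qed

lemma bdd_below_opnorm_phases: "bdd_below (range (\<lambda>\<phi>. opnorm (U - mat (exp (\<i> * of_real \<phi>)) ** V)))"
  by (rule bdd_belowI[of _ 0]) (auto simp: opnorm_nonneg)

lemma chan_dist_le_opnorm: "chan_dist U V \<le> opnorm (U - V)"
  unfolding chan_dist_def using cINF_lower[OF bdd_below_opnorm_phases, of 0] by simp

lemma chan_dist_le_chan_dist_add_norm_diff: "chan_dist U W \<le> chan_dist V W + norm (U - V)"
proof -
  have "chan_dist U W - norm (U - V) \<le> chan_dist V W"
    unfolding chan_dist_def[of V]
  proof (rule cINF_greatest)
    fix \<phi> :: real
    define E where "E = mat (exp (\<i> * of_real \<phi>)) ** W"
    have "chan_dist U W \<le> opnorm (U - E)"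
      unfolding chan_dist_def E_def by (rule cINF_lower[OF bdd_below_opnorm_phases]) simp
    also have "\<dots> \<le> opnorm (V - E) + norm (U - V)"
      using opnorm_le_opnorm_add_norm_diff[of "U - E" "V - E"] by simp
    finally show "chan_dist U W - norm (U - V) \<le> opnorm (V - mat (exp (\<i> * of_real \<phi>)) ** W)"
      by (simp add: E_def)
  qed simp
  then show ?thesis
    by simp
qed

lemma continuous_on_chan_dist: "continuous_on UNIV (\<lambda>U. chan_dist U W)"
proof (rule lipschitz_on_continuous_on[where L = 1], rule lipschitz_onI)
  show "dist (chan_dist U W) (chan_dist V W) \<le> 1 * dist U V" for U V
    using chan_dist_le_chan_dist_add_norm_diff[of U W V] chan_dist_le_chan_dist_add_norm_diff[of V W U]
    by (simp add: dist_real_def dist_norm norm_minus_commute abs_le_iff)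
qed simp

lemma chan_dist_phase_shift: "chan_dist (phase_shift \<psi> U) V = chan_dist U V"
proof -
  define g where "g \<phi> = opnorm (U - mat (exp (\<i> * of_real \<phi>)) ** V)" for \<phi>
  have shifted: "opnorm (phase_shift \<psi> U - mat (exp (\<i> * of_real \<phi>)) ** V) = g (\<phi> - \<psi>)" for \<phi>
  proof -
    have "exp (\<i> * of_real \<psi>) * exp (\<i> * of_real (\<phi> - \<psi>)) = exp (\<i> * of_real \<phi>)"
      by (simp add: exp_add[symmetric] algebra_simps)
    then have "phase_shift \<psi> U - mat (exp (\<i> * of_real \<phi>)) ** V
        = mat (exp (\<i> * of_real \<psi>)) ** (U - mat (exp (\<i> * of_real (\<phi> - \<psi>))) ** V)"
      by (simp add: phase_shift_def vec_eq_iff mat_matrix_mul_component right_diff_distrib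
          mult.assoc[symmetric])
    then show ?thesis
      unfolding g_def by (simp add: opnorm_mat_matrix_mul)
  qed
  have "range (\<lambda>\<phi>. g (\<phi> - \<psi>)) = range g"
    using surj_diff_right[of \<psi>] by (metis image_image)
  then show ?thesis
    unfolding chan_dist_def shifted by (simp add: g_def)
qed

section \<open>Measurability and averaging over global phases\<close>

lemma Int_in_sets_restrict_space_borel: "A \<in> sets borel \<Longrightarrow> \<Omega> \<inter> A \<in> sets (restrict_space borel \<Omega>)"
  by (auto simp: sets_restrict_space)

lemma unitary_superlevel_set_in_sets:
  fixes g :: "complex^'n^'n \<Rightarrow> real"
  assumes "sets \<mu> = sets (restrict_space borel unitary_group)" "continuous_on UNIV g"
  shows "{U \<in> unitary_group. r < g U} \<in> sets \<mu>"
proof -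
  have "open {U. r < g U}"
    using assms(2) by (intro open_Collect_less continuous_on_const)
  then have "unitary_group \<inter> {U. r < g U} \<in> sets \<mu>"
    unfolding assms(1) by (intro Int_in_sets_restrict_space_borel borel_open)
  moreover have "{U \<in> unitary_group. r < g U} = unitary_group \<inter> {U. r < g U}"
    by blast
  ultimately show ?thesis
    by simp
qed

lemma closed_eigenphases_graph:
  "closed {(v :: real^'n, U :: complex^'n^'n). eigenphases U (($) v)}"
proof -
  have "{(v :: real^'n, U :: complex^'n^'n). eigenphases U (($) v)}
      = (\<Inter>z. {p. det (mat z - snd p) = (\<Prod>j\<in>UNIV. z - exp (\<i> * of_real (fst p $ j)))})"
    by (auto simp: eigenphases_def)
  also have "closed \<dots>"
    unfolding det_def
    by (intro closed_INT ballI closed_Collect_eq continuous_intros continuous_on_component)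
  finally show ?thesis .
qed

lemma Fsig_borel_measurable:
  assumes "\<sigma> \<noteq> 0"
  shows "Fsig \<sigma> \<in> borel_measurable (restrict_space borel (unitary_group :: (complex^'n^'n) set))"
  unfolding borel_measurable_iff_ge
proof
  fix c :: real
  define T where "T = {(v :: real^'n, U :: complex^'n^'n). eigenphases U (($) v) \<and> c \<le> fp \<sigma> (($) v)}"
  define C where "C = {U. \<exists>v. v \<in> cbox (\<chi> j. - pi) (\<chi> j. pi) \<and> (v, U) \<in> T}"
  have "closed T"
  proof -
    have "T = {(v, U). eigenphases U (($) v)} \<inter> {p. c \<le> fp \<sigma> (($) (fst p))}"
      by (auto simp: T_def)
    moreover have "continuous_on UNIV (\<lambda>p :: (real^'n) \<times> (complex^'n^'n). fp \<sigma> (($) (fst p)))"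
      by (rule continuous_on_compose2[OF continuous_on_fp[OF assms]]) (intro continuous_intros, simp)
    ultimately show ?thesis
      by (simp add: closed_Int closed_eigenphases_graph closed_Collect_le)
  qed
  then have "closed C"
    unfolding C_def by (intro closed_compact_projection compact_cbox)
  have "{U \<in> space (restrict_space borel unitary_group). c \<le> Fsig \<sigma> U} = unitary_group \<inter> C"
  proof (intro equalityI subsetI)
    fix U :: "complex^'n^'n"
    assume "U \<in> {U \<in> space (restrict_space borel unitary_group). c \<le> Fsig \<sigma> U}"
    then have U: "unitary_mat U" "c \<le> Fsig \<sigma> U"
      by (auto simp: unitary_group_def space_restrict_space)
    obtain \<phi> where \<phi>: "eigenphases U \<phi>" "\<forall>j. - pi < \<phi> j \<and> \<phi> j \<le> pi"
      using eigenphases_exist[OF U(1)] by blast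
    then have "(\<chi> j. \<phi> j) \<in> cbox (\<chi> j. - pi) (\<chi> j. pi)"
      by (auto simp: mem_box_cart less_imp_le)
    moreover have "((\<chi> j. \<phi> j), U) \<in> T"
      using \<phi> U Fsig_eq_fp[OF assms U(1) \<phi>(1)] by (simp add: T_def vec_lambda_inverse)
    ultimately show "U \<in> unitary_group \<inter> C"
      using U by (auto simp: C_def unitary_group_def)
  next
    fix U :: "complex^'n^'n"
    assume "U \<in> unitary_group \<inter> C"
    then obtain v where U: "unitary_mat U" and v: "eigenphases U (($) v)" "c \<le> fp \<sigma> (($) v)"
      by (auto simp: C_def T_def unitary_group_def)
    then show "U \<in> {U \<in> space (restrict_space borel unitary_group). c \<le> Fsig \<sigma> U}"
      using Fsig_eq_fp[OF assms U v(1)] by (simp add: space_restrict_space unitary_group_def)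
  qed
  moreover have "unitary_group \<inter> C \<in> sets (restrict_space borel unitary_group)"
    using \<open>closed C\<close> by (intro Int_in_sets_restrict_space_borel borel_closed)
  ultimately show "{U \<in> space (restrict_space borel (unitary_group :: (complex^'n^'n) set)).
      c \<le> Fsig \<sigma> U} \<in> sets (restrict_space borel unitary_group)"
    by (simp only:)
qed

definition phase_average :: "(complex^'n^'n \<Rightarrow> real) \<Rightarrow> complex^'n^'n \<Rightarrow> real" where
  "phase_average f U = 1 / (2 * pi) * (LINT \<phi>:{0..2*pi}|lborel. f (phase_shift \<phi> U))"

lemma Ftilde_eq_phase_average: "Ftilde \<sigma> = phase_average (Fsig \<sigma>)"
  by (simp add: fun_eq_iff Ftilde_def phase_average_def phase_shift_def)

lemma continuous_on_phase_shift:
  "continuous_on UNIV (\<lambda>(\<phi>, U :: complex^'n^'n). phase_shift \<phi> U)"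
proof -
  have "(\<lambda>(\<phi>, U :: complex^'n^'n). phase_shift \<phi> U)
      = (\<lambda>p. \<chi> i j. exp (\<i> * of_real (fst p)) * snd p $ i $ j)"
    by (auto simp: fun_eq_iff vec_eq_iff phase_shift_def mat_matrix_mul_component)
  then show ?thesis
    by (simp only:) (intro continuous_on_vec_lambda continuous_intros continuous_on_component)
qed

lemma
  fixes \<mu> :: "(complex^'n^'n) measure"
  assumes sets: "sets \<mu> = sets (restrict_space borel unitary_group)" and space: "space \<mu> = unitary_group"
  shows measurable_phase_shift: "phase_shift \<phi> \<in> measurable \<mu> \<mu>"
    and measurable_phase_shift_pair:
      "(\<lambda>\<phi>. \<phi>) \<in> borel_measurable M \<Longrightarrow> (\<lambda>(\<phi>, U). phase_shift \<phi> U) \<in> measurable (M \<Otimes>\<^sub>M \<mu>) \<mu>"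
proof -
  note measurable_cong_sets[OF refl sets, simp] measurable_cong_sets[OF sets refl, simp]
  have ident: "(\<lambda>U. U) \<in> borel_measurable \<mu>"
    by (simp add: measurable_restrict_space1)
  have "continuous_on UNIV (phase_shift \<phi> :: complex^'n^'n \<Rightarrow> _)"
    using continuous_on_compose2[OF continuous_on_phase_shift, of UNIV "\<lambda>U. (\<phi>, U)"]
    by (simp add: continuous_on_Pair)
  then show "phase_shift \<phi> \<in> measurable \<mu> \<mu>"
    using measurable_compose[OF ident borel_measurable_continuous_onI] phase_shift_in_unitary_group space
    by (auto intro!: measurable_restrict_space2 simp: space_restrict_space)
  assume "(\<lambda>\<phi>. \<phi>) \<in> borel_measurable M"
  then have "(\<lambda>p. (fst p, snd p)) \<in> measurable (M \<Otimes>\<^sub>M \<mu>) (borel \<Otimes>\<^sub>M borel)"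
    by (intro measurable_Pair measurable_compose[OF measurable_fst] measurable_compose[OF measurable_snd ident])
  then have "(\<lambda>p. p) \<in> borel_measurable (M \<Otimes>\<^sub>M \<mu>)"
    by (simp add: borel_prod)
  then show "(\<lambda>(\<phi>, U). phase_shift \<phi> U) \<in> measurable (M \<Otimes>\<^sub>M \<mu>) \<mu>"
    using borel_measurable_continuous_on[OF continuous_on_phase_shift] phase_shift_in_unitary_group space
    by (auto intro!: measurable_restrict_space2 simp: space_pair_measure)
qed

lemma set_integral_mono_set:
  fixes f :: "'a \<Rightarrow> real"
  assumes "set_integrable M B f" "A \<in> sets M" "A \<subseteq> B" "\<And>x. x \<in> B \<Longrightarrow> 0 \<le> f x"
  shows "(LINT x:A|M. f x) \<le> (LINT x:B|M. f x)"
  using set_integrable_subset[OF assms(1-3)] assms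
  unfolding set_integrable_def set_lebesgue_integral_def
  by (intro integral_mono) (auto simp: indicator_def)

lemma set_integral_phase_average:
  fixes \<mu> :: "(complex^'n^'n) measure"
  assumes "finite_measure \<mu>"
    and sets: "sets \<mu> = sets (restrict_space borel unitary_group)" and space: "space \<mu> = unitary_group"
    and invariant: "\<And>\<phi>. distr \<mu> \<mu> (phase_shift \<phi>) = \<mu>"
    and f: "f \<in> borel_measurable \<mu>" "\<And>U. \<bar>f U\<bar> \<le> K"
    and S: "S \<in> sets \<mu>" "\<And>\<phi> U. U \<in> unitary_group \<Longrightarrow> phase_shift \<phi> U \<in> S \<longleftrightarrow> U \<in> S"
  shows "(LINT U:S|\<mu>. phase_average f U) = (LINT U:S|\<mu>. f U)"
proof -
  define I where "I = restrict_space lborel {0..2*pi}"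
  define g where "g U = indicator S U * f U" for U
  interpret \<mu>: finite_measure \<mu>
    by fact
  have "finite_measure I"
    by (intro finite_measureI) (simp add: I_def space_restrict_space emeasure_restrict_space)
  then interpret I: finite_measure I .
  interpret P: pair_sigma_finite I \<mu>
    unfolding pair_sigma_finite_def by (intro conjI I.sigma_finite_measure_axioms \<mu>.sigma_finite_measure_axioms)
  have g: "g \<in> borel_measurable \<mu>" "\<bar>g U\<bar> \<le> K" for U
    using f S(1) order_trans[OF abs_ge_zero f(2)]
    by (auto simp: g_def[abs_def] indicator_def abs_mult)
  have "(\<lambda>(\<phi>, U). g (phase_shift \<phi> U)) \<in> borel_measurable (I \<Otimes>\<^sub>M \<mu>)"
    unfolding split_beta'
    by (rule measurable_compose[OF measurable_phase_shift_pair[OF sets space, unfolded split_beta'] g(1)])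
      (simp add: I_def measurable_restrict_space1)
  then have integrable: "integrable (I \<Otimes>\<^sub>M \<mu>) (\<lambda>(\<phi>, U). g (phase_shift \<phi> U))"
    by (intro finite_measure.integrable_const_bound[where B = K] finite_measure_pair_measure
        \<open>finite_measure I\<close> assms(1)) (auto simp: g)
  have inner: "(LINT U|\<mu>. g (phase_shift \<phi> U)) = (LINT U|\<mu>. g U)" for \<phi>
    using integral_distr[OF measurable_phase_shift[OF sets space] g(1)] invariant by simp
  have average: "indicator S U * phase_average f U = 1 / (2 * pi) * (LINT \<phi>|I. g (phase_shift \<phi> U))"
    if "U \<in> space \<mu>" for U
  proof -
    have "indicator S (phase_shift \<phi> U) = (indicator S U :: real)" for \<phi>
      using S(2) that space by (simp add: indicator_def)
    then show ?thesis
      by (simp add: phase_average_def set_lebesgue_integral_def I_def integral_restrict_space g_def)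
  qed
  have "(LINT U:S|\<mu>. phase_average f U) = (LINT U|\<mu>. 1 / (2 * pi) * (LINT \<phi>|I. g (phase_shift \<phi> U)))"
    unfolding set_lebesgue_integral_def using average by (intro Bochner_Integration.integral_cong) auto
  also have "\<dots> = 1 / (2 * pi) * (LINT \<phi>|I. LINT U|\<mu>. g (phase_shift \<phi> U))"
    using P.Fubini_integral[OF integrable] by simp
  also have "\<dots> = 1 / (2 * pi) * (measure I (space I) * (LINT U|\<mu>. g U))"
    by (simp add: inner)
  also have "measure I (space I) = 2 * pi"
    by (simp add: I_def space_restrict_space measure_restrict_space)
  finally show ?thesis
    by (simp add: set_lebesgue_integral_def g_def)
qed

lemma haar_measure_phase_invariant:
  assumes "haar_measure \<mu>"
  shows "distr \<mu> \<mu> (phase_shift \<phi>) = \<mu>"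
proof -
  have "mat (exp (\<i> * of_real \<phi>)) \<in> unitary_group"
    by (simp add: unitary_group_def unitary_mat_mat)
  then show ?thesis
    using assms unfolding haar_measure_def phase_shift_def[abs_def] by blast
qed

lemma
  fixes \<mu> :: "(complex^'n^'n) measure"
  assumes "haar_measure \<mu>" "\<sigma> > 0"
  shows borel_measurable_Fsig_haar: "Fsig \<sigma> \<in> borel_measurable \<mu>"
    and integrable_Fsig_haar: "integrable \<mu> (Fsig \<sigma>)"
proof -
  interpret prob_space \<mu>
    using assms(1) by (simp add: haar_measure_def)
  have sets: "sets \<mu> = sets (restrict_space borel unitary_group)"
    using assms(1) by (simp add: haar_measure_def)
  show measurable: "Fsig \<sigma> \<in> borel_measurable \<mu>"
    unfolding measurable_cong_sets[OF sets refl] using assms(2) by (intro Fsig_borel_measurable) simp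
  obtain K where "\<And>U :: complex^'n^'n. \<bar>Fsig \<sigma> U\<bar> \<le> K"
    using Fsig_bounded[OF assms(2)] by blast
  then show "integrable \<mu> (Fsig \<sigma>)"
    using measurable by (intro integrable_const_bound) auto
qed

lemma set_integral_Ftilde_eq_Fsig:
  fixes \<mu> :: "(complex^'n^'n) measure"
  assumes "haar_measure \<mu>" "\<sigma> > 0" "S \<in> sets \<mu>"
    and "\<And>\<phi> U. U \<in> unitary_group \<Longrightarrow> phase_shift \<phi> U \<in> S \<longleftrightarrow> U \<in> S"
  shows "(LINT U:S|\<mu>. Ftilde \<sigma> U) = (LINT U:S|\<mu>. Fsig \<sigma> U)"
proof -
  interpret prob_space \<mu>
    using assms(1) by (simp add: haar_measure_def)
  obtain K where "\<And>U :: complex^'n^'n. \<bar>Fsig \<sigma> U\<bar> \<le> K"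
    using Fsig_bounded[OF assms(2)] by blast
  then show ?thesis
    unfolding Ftilde_eq_phase_average
    using assms haar_measure_phase_invariant[OF assms(1)] borel_measurable_Fsig_haar[OF assms(1,2)]
    by (intro set_integral_phase_average finite_measure_axioms) (auto simp: haar_measure_def)
qed

theorem lemma10:
  fixes \<mu> :: "(complex^'n^'n) measure" and \<sigma> r :: real
  assumes "haar_measure \<mu>" and "\<sigma> > 0" and "r \<ge> 0"
  shows "(LINT U:{U\<in>unitary_group. chan_dist U (mat 1) > r}|\<mu>. Ftilde \<sigma> U)
         \<le> (LINT U:{U\<in>unitary_group. opnorm (U - mat 1) > r}|\<mu>. Fsig \<sigma> U)"
proof -
  define S :: "(complex^'n^'n) set" where "S = {U \<in> unitary_group. chan_dist U (mat 1) > r}"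
  define T :: "(complex^'n^'n) set" where "T = {U \<in> unitary_group. opnorm (U - mat 1) > r}"
  have sets: "sets \<mu> = sets (restrict_space borel unitary_group)"
    using assms(1) by (simp add: haar_measure_def)
  have "S \<in> sets \<mu>"
    unfolding S_def using sets continuous_on_chan_dist by (rule unitary_superlevel_set_in_sets)
  have "T \<in> sets \<mu>"
    unfolding T_def using sets continuous_on_compose2[OF continuous_on_opnorm, of UNIV "\<lambda>U. U - mat 1"]
    by (intro unitary_superlevel_set_in_sets) (simp_all add: continuous_on_diff)
  have "(LINT U:S|\<mu>. Ftilde \<sigma> U) = (LINT U:S|\<mu>. Fsig \<sigma> U)"
    using assms(1,2) \<open>S \<in> sets \<mu>\<close> by (rule set_integral_Ftilde_eq_Fsig)
      (auto simp: S_def chan_dist_phase_shift phase_shift_in_unitary_group)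
  also have "\<dots> \<le> (LINT U:T|\<mu>. Fsig \<sigma> U)"
  proof (rule set_integral_mono_set)
    show "set_integrable \<mu> T (Fsig \<sigma>)"
      unfolding set_integrable_def using \<open>T \<in> sets \<mu>\<close> integrable_Fsig_haar[OF assms(1,2)]
      by (rule integrable_mult_indicator)
    show "S \<subseteq> T"
      unfolding S_def T_def using chan_dist_le_opnorm order_less_le_trans by blast
  qed (use \<open>S \<in> sets \<mu>\<close> Fsig_nonneg[OF assms(2)] in auto)
  finally show ?thesis
    by (simp only: S_def T_def)
qed

end
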